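(* Let $S$ be a set, let $f:2^S\to 2^S$ be monotonic with respect to $\subseteq$, and let $X\subseteq S$. Then $X$ is supported for $f$ if and only if $X\subseteq f(X)$.
   Context: For a binary relation ${\prec}$ on $X$ and $x\in X$, $\prec^{-1}(x)=\{x'\in X\mid x'\prec x\}$. A pair $(X,\prec)$ is a support ordering for $f$ if $X\subseteq S$, ${\prec}\subseteq X\times X$, and $x\in f(\prec^{-1}(x))$ for every $x\in X$. A set $X\subseteq S$ is supported for $f$ if there is some relation ${\prec}\subseteq X\times X$ such that $(X,\prec)$ is a support ordering for $f$. *)

theory Defs
  imports Main
begin

text \<open>prec^{-1}(x) = {x'. x' prec x}; relations are sets of pairs, (x', x) \<in> R means x' prec x.\<close>
definition pred_set :: "'a rel \<Rightarrow> 'a \<Rightarrow> 'a set" where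
  "pred_set R x = {x'. (x', x) \<in> R}"

definition support_ordering :: "'a set \<Rightarrow> ('a set \<Rightarrow> 'a set) \<Rightarrow> 'a set \<Rightarrow> 'a rel \<Rightarrow> bool" where
  "support_ordering S f X R \<longleftrightarrow>
     X \<subseteq> S \<and> R \<subseteq> X \<times> X \<and> (\<forall>x\<in>X. x \<in> f (pred_set R x))"

definition supported :: "'a set \<Rightarrow> ('a set \<Rightarrow> 'a set) \<Rightarrow> 'a set \<Rightarrow> bool" where
  "supported S f X \<longleftrightarrow> (\<exists>R \<subseteq> X \<times> X. support_ordering S f X R)"

end

theory Submission
  imports Defs
begin

text \<open>If \<open>X \<subseteq> f X\<close>, the total relation \<open>X \<times> X\<close> is a support ordering, since every point then
  has all of \<open>X\<close> as predecessors. Conversely, the predecessors of any point in a support ordering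
  lie in \<open>X\<close>, so monotonicity lifts \<open>x \<in> f (\<prec>\<^sup>-\<^sup>1(x))\<close> to \<open>x \<in> f X\<close>.\<close>

lemma pred_set_subset: "R \<subseteq> A \<times> B \<Longrightarrow> pred_set R x \<subseteq> A"
  unfolding pred_set_def by blast

lemma pred_set_Times: "x \<in> B \<Longrightarrow> pred_set (A \<times> B) x = A"
  unfolding pred_set_def by blast

lemma support_ordering_imp_subset:
  assumes mono: "\<And>A B. A \<subseteq> S \<Longrightarrow> B \<subseteq> S \<Longrightarrow> A \<subseteq> B \<Longrightarrow> f A \<subseteq> f B"
    and "support_ordering S f X R"
  shows "X \<subseteq> f X"
proof
  fix x assume "x \<in> X"
  have X_sub: "X \<subseteq> S" and R_sub: "R \<subseteq> X \<times> X"
    and x_supported: "\<forall>x\<in>X. x \<in> f (pred_set R x)"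
    using assms(2) unfolding support_ordering_def by blast+
  have "pred_set R x \<subseteq> X"
    using R_sub by (rule pred_set_subset)
  then have "f (pred_set R x) \<subseteq> f X"
    using X_sub by (intro mono) blast+
  then show "x \<in> f X"
    using x_supported \<open>x \<in> X\<close> by blast
qed

lemma support_ordering_Times:
  assumes "X \<subseteq> S" and "X \<subseteq> f X"
  shows "support_ordering S f X (X \<times> X)"
  unfolding support_ordering_def
proof (intro conjI ballI)
  fix x assume "x \<in> X"
  then show "x \<in> f (pred_set (X \<times> X) x)"
    using assms(2) by (simp add: pred_set_Times subsetD)
qed (use assms(1) in blast)+

theorem theorem2:
  fixes S :: "'a set" and f :: "'a set \<Rightarrow> 'a set" and X :: "'a set"
  assumes f_maps: "\<And>A. A \<subseteq> S \<Longrightarrow> f A \<subseteq> S"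
    and f_mono: "\<And>A B. A \<subseteq> S \<Longrightarrow> B \<subseteq> S \<Longrightarrow> A \<subseteq> B \<Longrightarrow> f A \<subseteq> f B"
    and X_sub: "X \<subseteq> S"
  shows "supported S f X \<longleftrightarrow> X \<subseteq> f X"
proof
  assume "supported S f X"
  then obtain R where "support_ordering S f X R"
    unfolding supported_def by blast
  with f_mono show "X \<subseteq> f X"
    by (rule support_ordering_imp_subset)
next
  assume "X \<subseteq> f X"
  then have "support_ordering S f X (X \<times> X)"
    by (rule support_ordering_Times[OF X_sub])
  then show "supported S f X"
    unfolding supported_def by auto
qed

end
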